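(* Let $\mu$ be a probability measure on $\mathbb{R}^n$ that is $\alpha$-regular for some $\alpha\geq 1$. Then for every $t\geq 2$, $$B_t(\mu)\subseteq 4e\alpha\, Z_t(\mu).$$
   Context: $\mu$ is $\alpha$-regular if for all $s\geq t\geq 2$ and all $v\in\mathbb{R}^n$, $\left(\int|\langle v,x\rangle|^s d\mu(x)\right)^{1/s}\leq \alpha\frac{s}{t}\left(\int|\langle v,x\rangle|^t d\mu(x)\right)^{1/t}$. $\Lambda_\mu(v)=\ln\int e^{\langle v,x\rangle}d\mu(x)$ and the Cramér transform is $\Lambda_\mu^*(v)=\sup_{u\in\mathbb{R}^n}\{\langle v,u\rangle-\Lambda_\mu(u)\}$; $B_t(\mu)=\{v:\Lambda^*_\mu(v)\leq t\}$. $Z_t(\mu)$ is the convex body with support function $h_{Z_t(\mu)}(y)=\left(\int|\langle x,y\rangle|^t d\mu(x)\right)^{1/t}$; equivalently $Z_t(\mu)=\{x: |\langle v,x\rangle|^t\leq \int|\langle v,y\rangle|^t d\mu(y)\ \forall v\}$. *)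

theory Defs
  imports "HOL-Probability.Probability"
begin

definition moment_dir :: "'a::euclidean_space measure \<Rightarrow> 'a \<Rightarrow> real \<Rightarrow> ennreal" where
  "moment_dir M v t = (\<integral>\<^sup>+ x. ennreal (\<bar>v \<bullet> x\<bar> powr t) \<partial>M)"

text \<open>When the t-th moment is infinite the right-hand side is infinite
  and the inequality holds trivially; otherwise the s-th moment must be finite and the
  inequality of the L^s and L^t norms holds.\<close>
definition regular :: "real \<Rightarrow> 'a::euclidean_space measure \<Rightarrow> bool" where
  "regular \<alpha> M \<longleftrightarrow> (\<forall>s t v. 2 \<le> t \<and> t \<le> s \<and> moment_dir M v t < \<infinity> \<longrightarrow>
      moment_dir M v s < \<infinity> \<and>
      enn2real (moment_dir M v s) powr (1/s) \<le> \<alpha> * (s/t) * enn2real (moment_dir M v t) powr (1/t))"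

definition log_laplace :: "'a::euclidean_space measure \<Rightarrow> 'a \<Rightarrow> ereal" where
  "log_laplace M u = (let I = (\<integral>\<^sup>+ x. ennreal (exp (u \<bullet> x)) \<partial>M) in
      if I = \<infinity> then \<infinity> else ereal (ln (enn2real I)))"

definition cramer :: "'a::euclidean_space measure \<Rightarrow> 'a \<Rightarrow> ereal" where
  "cramer M v = (SUP u. ereal (v \<bullet> u) - log_laplace M u)"

definition B_set :: "real \<Rightarrow> 'a::euclidean_space measure \<Rightarrow> 'a set" where
  "B_set t M = {v. cramer M v \<le> ereal t}"

definition Z_set :: "real \<Rightarrow> 'a::euclidean_space measure \<Rightarrow> 'a set" where
  "Z_set t M = {x. \<forall>v. ennreal (\<bar>v \<bullet> x\<bar> powr t) \<le> moment_dir M v t}"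

end

theory Submission
  imports Defs
begin

text \<open>Let \<open>v \<in> B_t(\<mu>)\<close> and let \<open>w\<close> be a direction whose \<open>t\<close>-th moment is at most 1. Expanding
  \<open>exp (\<lambda> \<langle>w, x\<rangle>)\<close> into its Taylor series, the moments of order \<open>k \<le> t\<close> are at most 2, and those
  of order \<open>k \<ge> t\<close> are at most \<open>(\<alpha> k / t)^k\<close> by regularity. For \<open>\<lambda> = t / (2 e \<alpha>)\<close> the bound
  \<open>k^k \<le> e^k k!\<close> makes the series at most \<open>2 e^\<lambda> + 2\<close>, so \<open>\<Lambda>(\<lambda> w) \<le> ln 4 + \<lambda>\<close>, and the
  definition of the Cramer transform gives \<open>\<lambda> \<langle>v, w\<rangle> \<le> t + ln 4 + \<lambda> \<le> 2 t\<close>, i.e.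
  \<open>\<langle>v, w\<rangle> \<le> 4 e \<alpha>\<close>. Rescaling \<open>w\<close> yields \<open>|\<langle>v, w\<rangle>| \<le> 4 e \<alpha> \<parallel>\<langle>w, \<cdot>\<rangle>\<parallel>\<^sub>t\<close>,
  which says that \<open>v / (4 e \<alpha>) \<in> Z_t(\<mu>)\<close>.\<close>

lemma borel_measurable_inner_sets_borel:
  fixes M :: "'a::euclidean_space measure"
  assumes "sets M = sets borel"
  shows "(\<lambda>x. w \<bullet> x) \<in> borel_measurable M"
  using measurable_ident_sets[OF assms] by (intro borel_measurable_inner) auto

lemma moment_dir_uminus [simp]: "moment_dir M (- w) t = moment_dir M w t"
  by (simp add: moment_dir_def)

lemma moment_dir_scaleR:
  fixes M :: "'a::euclidean_space measure"
  assumes "sets M = sets borel"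
  shows "moment_dir M (c *\<^sub>R w) t = ennreal (\<bar>c\<bar> powr t) * moment_dir M w t"
proof -
  note [measurable] = borel_measurable_inner_sets_borel[OF assms]
  have "\<bar>(c *\<^sub>R w) \<bullet> x\<bar> powr t = \<bar>c\<bar> powr t * \<bar>w \<bullet> x\<bar> powr t" for x
    by (simp add: abs_mult powr_mult)
  then show ?thesis
    unfolding moment_dir_def by (simp add: ennreal_mult nn_integral_cmult)
qed

lemma power_le_one_plus_powr:
  fixes y t :: real
  assumes "0 \<le> y" and "real k \<le> t"
  shows "y ^ k \<le> 1 + y powr t"
proof (cases "y \<le> 1")
  case True
  then have "y ^ k \<le> 1" using assms(1) by (simp add: power_le_one)
  then show ?thesis using powr_ge_zero[of y t] by linarith
next
  case False
  then have "y ^ k = y powr real k" by (simp add: powr_realpow)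
  also have "\<dots> \<le> y powr t" using False assms(2) by (intro powr_mono) auto
  finally show ?thesis by simp
qed

lemma nn_integral_abs_inner_power_le_two:
  fixes M :: "'a::euclidean_space measure"
  assumes "prob_space M" and "sets M = sets borel"
    and "real k \<le> t" and "moment_dir M w t \<le> 1"
  shows "(\<integral>\<^sup>+ x. ennreal (\<bar>w \<bullet> x\<bar> ^ k) \<partial>M) \<le> 2"
proof -
  interpret prob_space M by fact
  note [measurable] = borel_measurable_inner_sets_borel[OF assms(2)]
  have "(\<integral>\<^sup>+ x. ennreal (\<bar>w \<bullet> x\<bar> ^ k) \<partial>M) \<le> (\<integral>\<^sup>+ x. 1 + ennreal (\<bar>w \<bullet> x\<bar> powr t) \<partial>M)"
  proof (intro nn_integral_mono)
    fix x
    have "ennreal (\<bar>w \<bullet> x\<bar> ^ k) \<le> ennreal (1 + \<bar>w \<bullet> x\<bar> powr t)"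
      using power_le_one_plus_powr[OF abs_ge_zero assms(3)] by (rule ennreal_leI)
    then show "ennreal (\<bar>w \<bullet> x\<bar> ^ k) \<le> 1 + ennreal (\<bar>w \<bullet> x\<bar> powr t)"
      by simp
  qed
  also have "\<dots> = 1 + moment_dir M w t"
    by (simp add: nn_integral_add moment_dir_def emeasure_space_1)
  also have "\<dots> \<le> 1 + 1"
    using assms(4) by (rule add_left_mono)
  finally show ?thesis by simp
qed

lemma nn_integral_abs_inner_power_le_regular:
  fixes M :: "'a::euclidean_space measure"
  assumes "regular \<alpha> M" and "0 \<le> \<alpha>" and "2 \<le> t" and "t \<le> real k"
    and "moment_dir M w t \<le> 1"
  shows "(\<integral>\<^sup>+ x. ennreal (\<bar>w \<bullet> x\<bar> ^ k) \<partial>M) \<le> ennreal ((\<alpha> * k / t) ^ k)"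
proof -
  have "k \<noteq> 0" using assms(3,4) by auto
  then have integral_eq: "(\<integral>\<^sup>+ x. ennreal (\<bar>w \<bullet> x\<bar> ^ k) \<partial>M) = moment_dir M w k"
    by (simp add: moment_dir_def powr_realpow')
  have "moment_dir M w t < \<infinity>"
    using assms(5) by (simp add: order_le_less_trans)
  with assms(1,3,4) have finite: "moment_dir M w k < \<infinity>"
    and root_le: "enn2real (moment_dir M w k) powr (1/k)
        \<le> \<alpha> * (k/t) * enn2real (moment_dir M w t) powr (1/t)"
    unfolding regular_def by auto
  have "enn2real (moment_dir M w k) powr (1/k) \<le> \<alpha> * (k/t) * 1"
  proof (rule order_trans[OF root_le], intro mult_left_mono)
    show "enn2real (moment_dir M w t) powr (1/t) \<le> 1"
      using assms(3,5) by (intro powr_le1) (auto intro: enn2real_leI)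
  qed (use assms(2,3) in auto)
  then have "(enn2real (moment_dir M w k) powr (1/k)) ^ k \<le> (\<alpha> * k / t) ^ k"
    by (intro power_mono) auto
  then have "enn2real (moment_dir M w k) \<le> (\<alpha> * k / t) ^ k"
    using \<open>k \<noteq> 0\<close> by (simp add: powr_powr flip: powr_realpow')
  then have "ennreal (enn2real (moment_dir M w k)) \<le> ennreal ((\<alpha> * k / t) ^ k)"
    by (rule ennreal_leI)
  then show ?thesis
    using finite by (simp add: integral_eq)
qed

lemma self_power_div_fact_le_exp: "real k ^ k / fact k \<le> exp (real k)"
proof -
  have series: "(\<lambda>n. real k ^ n / fact n) sums exp (real k)"
    using exp_converges[of "real k"] by (simp add: divide_inverse mult.commute)
  have "(\<Sum>n\<in>{k}. real k ^ n / fact n) \<le> (\<Sum>n. real k ^ n / fact n)"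
    by (rule sum_le_suminf[OF sums_summable[OF series]]) auto
  then show ?thesis
    using sums_unique[OF series] by simp
qed

lemma self_power_div_fact_le_half_power: "(real k / (2 * exp 1)) ^ k / fact k \<le> (1/2) ^ k"
proof -
  have "(real k / (2 * exp 1)) ^ k / fact k = (real k ^ k / fact k) / (2 * exp 1) ^ k"
    by (simp add: power_divide)
  also have "\<dots> \<le> exp (real k) / (2 * exp 1) ^ k"
    by (intro divide_right_mono self_power_div_fact_le_exp) auto
  also have "\<dots> = (1/2) ^ k"
    by (simp add: power_mult_distrib power_divide flip: exp_of_nat_mult)
  finally show ?thesis .
qed

lemma nn_integral_exp_le_suminf_moments:
  fixes f :: "'a \<Rightarrow> real"
  assumes [measurable]: "f \<in> borel_measurable M"
  shows "(\<integral>\<^sup>+ x. ennreal (exp (f x)) \<partial>M)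
    \<le> (\<Sum>k. ennreal (1 / fact k) * (\<integral>\<^sup>+ x. ennreal (\<bar>f x\<bar> ^ k) \<partial>M))"
proof -
  have "ennreal (exp (f x)) \<le> (\<Sum>k. ennreal (1 / fact k) * ennreal (\<bar>f x\<bar> ^ k))" for x
  proof -
    have series: "(\<lambda>k. 1 / fact k * \<bar>f x\<bar> ^ k) sums exp \<bar>f x\<bar>"
      using exp_converges[of "\<bar>f x\<bar>"] by (simp add: divide_inverse)
    have "ennreal (exp (f x)) \<le> ennreal (exp \<bar>f x\<bar>)"
      by (intro ennreal_leI) simp
    also have "\<dots> = (\<Sum>k. ennreal (1 / fact k * \<bar>f x\<bar> ^ k))"
      by (rule suminf_ennreal_eq[symmetric, OF _ series]) simp
    also have "\<dots> = (\<Sum>k. ennreal (1 / fact k) * ennreal (\<bar>f x\<bar> ^ k))"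
      by (intro suminf_cong ennreal_mult) auto
    finally show ?thesis .
  qed
  then have "(\<integral>\<^sup>+ x. ennreal (exp (f x)) \<partial>M)
      \<le> (\<integral>\<^sup>+ x. (\<Sum>k. ennreal (1 / fact k) * ennreal (\<bar>f x\<bar> ^ k)) \<partial>M)"
    by (intro nn_integral_mono)
  also have "\<dots> = (\<Sum>k. \<integral>\<^sup>+ x. ennreal (1 / fact k) * ennreal (\<bar>f x\<bar> ^ k) \<partial>M)"
    by (rule nn_integral_suminf) simp
  also have "\<dots> = (\<Sum>k. ennreal (1 / fact k) * (\<integral>\<^sup>+ x. ennreal (\<bar>f x\<bar> ^ k) \<partial>M))"
    by (simp add: nn_integral_cmult)
  finally show ?thesis .
qed

lemma nn_integral_exp_taylor_term_le:
  fixes M :: "'a::euclidean_space measure"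
  assumes "prob_space M" and "sets M = sets borel" and "regular \<alpha> M" and "0 < \<alpha>"
    and "2 \<le> t" and "moment_dir M w t \<le> 1"
    and l_def: "l = t / (2 * exp 1 * \<alpha>)"
  shows "ennreal (l ^ k / fact k) * (\<integral>\<^sup>+ x. ennreal (\<bar>w \<bullet> x\<bar> ^ k) \<partial>M)
    \<le> ennreal (2 * (l ^ k / fact k) + (1/2) ^ k)"
proof -
  have "0 < l" using assms(4,5) by (simp add: l_def)
  show ?thesis
  proof (cases "real k \<le> t")
    case True
    have "ennreal (l ^ k / fact k) * (\<integral>\<^sup>+ x. ennreal (\<bar>w \<bullet> x\<bar> ^ k) \<partial>M)
        \<le> ennreal (l ^ k / fact k) * 2"
      using nn_integral_abs_inner_power_le_two[OF assms(1,2) True assms(6)]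
      by (rule mult_left_mono) simp
    also have "\<dots> \<le> ennreal (2 * (l ^ k / fact k) + (1/2) ^ k)"
      using \<open>0 < l\<close> by (simp add: mult.commute flip: ennreal_mult ennreal_numeral)
    finally show ?thesis .
  next
    case False
    have "ennreal (l ^ k / fact k) * (\<integral>\<^sup>+ x. ennreal (\<bar>w \<bullet> x\<bar> ^ k) \<partial>M)
        \<le> ennreal (l ^ k / fact k) * ennreal ((\<alpha> * k / t) ^ k)"
      using nn_integral_abs_inner_power_le_regular[OF assms(3) _ assms(5) _ assms(6)] False assms(4)
      by (intro mult_left_mono) auto
    also have "\<dots> = ennreal ((real k / (2 * exp 1)) ^ k / fact k)"
    proof -
      have "l * (\<alpha> * k / t) = real k / (2 * exp 1)"
        using assms(4,5) by (simp add: l_def field_simps)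
      then show ?thesis
        using \<open>0 < l\<close> assms(4,5)
        by (simp add: power_mult_distrib[symmetric] flip: ennreal_mult)
    qed
    also have "\<dots> \<le> ennreal (2 * (l ^ k / fact k) + (1/2) ^ k)"
      using self_power_div_fact_le_half_power[of k] \<open>0 < l\<close>
      by (intro ennreal_leI add_increasing) auto
    finally show ?thesis .
  qed
qed

lemma nn_integral_exp_inner_le:
  fixes M :: "'a::euclidean_space measure"
  assumes "prob_space M" and "sets M = sets borel" and "regular \<alpha> M" and "0 < \<alpha>"
    and "2 \<le> t" and "moment_dir M w t \<le> 1"
    and l_def: "l = t / (2 * exp 1 * \<alpha>)"
  shows "(\<integral>\<^sup>+ x. ennreal (exp ((l *\<^sub>R w) \<bullet> x)) \<partial>M) \<le> ennreal (2 * exp l + 2)"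
proof -
  note [measurable] = borel_measurable_inner_sets_borel[OF assms(2)]
  have "0 < l" using assms(4,5) by (simp add: l_def)
  have term_eq: "ennreal (1 / fact k) * (\<integral>\<^sup>+ x. ennreal (\<bar>(l *\<^sub>R w) \<bullet> x\<bar> ^ k) \<partial>M)
      = ennreal (l ^ k / fact k) * (\<integral>\<^sup>+ x. ennreal (\<bar>w \<bullet> x\<bar> ^ k) \<partial>M)" for k
  proof -
    have "(\<integral>\<^sup>+ x. ennreal (\<bar>(l *\<^sub>R w) \<bullet> x\<bar> ^ k) \<partial>M)
        = (\<integral>\<^sup>+ x. ennreal (l ^ k) * ennreal (\<bar>w \<bullet> x\<bar> ^ k) \<partial>M)"
      using \<open>0 < l\<close> by (intro nn_integral_cong) (simp add: abs_mult power_mult_distrib ennreal_mult)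
    also have "\<dots> = ennreal (l ^ k) * (\<integral>\<^sup>+ x. ennreal (\<bar>w \<bullet> x\<bar> ^ k) \<partial>M)"
      by (rule nn_integral_cmult) measurable
    finally have integral_eq: "(\<integral>\<^sup>+ x. ennreal (\<bar>(l *\<^sub>R w) \<bullet> x\<bar> ^ k) \<partial>M)
        = ennreal (l ^ k) * (\<integral>\<^sup>+ x. ennreal (\<bar>w \<bullet> x\<bar> ^ k) \<partial>M)" .
    have "ennreal (1 / fact k) * ennreal (l ^ k) = ennreal (l ^ k / fact k)"
      using \<open>0 < l\<close> by (simp flip: ennreal_mult)
    then show ?thesis
      by (simp only: integral_eq mult.assoc[symmetric])
  qed
  have series: "(\<lambda>k. 2 * (l ^ k / fact k) + (1/2::real) ^ k) sums (2 * exp l + 2)"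
  proof -
    have "(\<lambda>k. l ^ k / fact k) sums exp l"
      using exp_converges[of l] by (simp add: divide_inverse mult.commute)
    moreover have "(\<lambda>k. (1/2::real) ^ k) sums 2"
      using geometric_sums[of "1/2::real"] by simp
    ultimately show ?thesis by (intro sums_add sums_mult)
  qed
  have "(\<integral>\<^sup>+ x. ennreal (exp ((l *\<^sub>R w) \<bullet> x)) \<partial>M)
      \<le> (\<Sum>k. ennreal (1 / fact k) * (\<integral>\<^sup>+ x. ennreal (\<bar>(l *\<^sub>R w) \<bullet> x\<bar> ^ k) \<partial>M))"
    by (rule nn_integral_exp_le_suminf_moments) measurable
  also have "\<dots> \<le> (\<Sum>k. ennreal (2 * (l ^ k / fact k) + (1/2) ^ k))"
    unfolding term_eq using nn_integral_exp_taylor_term_le[OF assms]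
    by (intro suminf_le) auto
  also have "\<dots> = ennreal (2 * exp l + 2)"
    using \<open>0 < l\<close> by (intro suminf_ennreal_eq series) auto
  finally show ?thesis .
qed

lemma inner_le_of_mem_B_set:
  assumes "v \<in> B_set t M" and "(\<integral>\<^sup>+ x. ennreal (exp (u \<bullet> x)) \<partial>M) \<le> ennreal B" and "1 \<le> B"
  shows "v \<bullet> u \<le> t + ln B"
proof -
  define I where "I = (\<integral>\<^sup>+ x. ennreal (exp (u \<bullet> x)) \<partial>M)"
  have "I \<noteq> \<infinity>"
    using assms(2) by (auto simp: I_def dest: neq_top_trans[rotated])
  then have log_laplace_eq: "log_laplace M u = ereal (ln (enn2real I))"
    by (simp add: log_laplace_def I_def)
  have "ln (enn2real I) \<le> ln B"
  proof (cases "enn2real I = 0")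
    case False
    moreover have "enn2real I \<le> B"
      using assms(2,3) by (intro enn2real_leI) (auto simp: I_def)
    ultimately show ?thesis
      using assms(3) by (simp add: less_le)
  qed (use assms(3) in simp)
  have "ereal (v \<bullet> u) - log_laplace M u \<le> cramer M v"
    unfolding cramer_def by (rule SUP_upper) simp
  also have "\<dots> \<le> ereal t"
    using assms(1) by (simp add: B_set_def)
  finally have "v \<bullet> u \<le> t + ln (enn2real I)"
    by (simp add: log_laplace_eq)
  with \<open>ln (enn2real I) \<le> ln B\<close> show ?thesis by simp
qed

lemma ln_four_le: "ln (4::real) \<le> 3/2"
proof -
  have "(2::real) \<le> exp (3/4)"
    using exp_lower_Taylor_quadratic[of "3/4::real"] by (simp add: power2_eq_square)
  then have "ln (2::real) \<le> ln (exp (3/4))"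
    by (subst ln_le_cancel_iff) auto
  moreover have "ln (4::real) = 2 * ln 2"
    using ln_realpow[of 2 2] by simp
  ultimately show ?thesis by simp
qed

lemma abs_inner_le_of_moment_le_one:
  fixes M :: "'a::euclidean_space measure"
  assumes "prob_space M" and "sets M = sets borel" and "regular \<alpha> M" and "1 \<le> \<alpha>"
    and "2 \<le> t" and "v \<in> B_set t M" and "moment_dir M w t \<le> 1"
  shows "\<bar>w \<bullet> v\<bar> \<le> 4 * exp 1 * \<alpha>"
proof -
  have "u \<bullet> v \<le> 4 * exp 1 * \<alpha>" if "moment_dir M u t \<le> 1" for u
  proof -
    define l where "l = t / (2 * exp 1 * \<alpha>)"
    have "0 < l" using assms(4,5) by (simp add: l_def)
    have "l \<le> t / 4"
    proof -
      have "2 \<le> exp (1::real)"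
        using exp_ge_add_one_self[of 1] by simp
      then have "4 \<le> 2 * exp 1 * \<alpha>"
        using assms(4) mult_mono[of 2 "exp 1" 1 \<alpha>] by (simp add: mult.commute)
      then show ?thesis
        unfolding l_def using assms(5) by (intro divide_left_mono) auto
    qed
    have "(\<integral>\<^sup>+ x. ennreal (exp ((l *\<^sub>R u) \<bullet> x)) \<partial>M) \<le> ennreal (2 * exp l + 2)"
      using assms(1-5) that by (intro nn_integral_exp_inner_le) (auto simp: l_def)
    also have "\<dots> \<le> ennreal (4 * exp l)"
      using \<open>0 < l\<close> by (intro ennreal_leI) simp
    finally have "v \<bullet> (l *\<^sub>R u) \<le> t + ln (4 * exp l)"
      by (rule inner_le_of_mem_B_set[OF assms(6)]) (use \<open>0 < l\<close> one_le_exp_iff[of l] in linarith)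
    then have "l * (u \<bullet> v) \<le> t + ln 4 + l"
      by (simp add: ln_mult inner_commute)
    also have "\<dots> \<le> 2 * t"
      using ln_four_le \<open>l \<le> t / 4\<close> assms(5) by simp
    also have "\<dots> = l * (4 * exp 1 * \<alpha>)"
      using assms(4) by (simp add: l_def)
    finally show ?thesis
      using \<open>0 < l\<close> by simp
  qed
  from this[of w] this[of "- w"] assms(7) show ?thesis
    by auto
qed

lemma abs_inner_le_moment_root:
  fixes M :: "'a::euclidean_space measure"
  assumes "prob_space M" and "sets M = sets borel" and "regular \<alpha> M" and "1 \<le> \<alpha>"
    and "2 \<le> t" and "v \<in> B_set t M" and "moment_dir M w t < \<infinity>"
  shows "\<bar>w \<bullet> v\<bar> \<le> 4 * exp 1 * \<alpha> * enn2real (moment_dir M w t) powr (1/t)"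
proof -
  define K where "K = 4 * exp 1 * \<alpha>"
  define h where "h = enn2real (moment_dir M w t) powr (1/t)"
  have "0 < K" using assms(4) by (simp add: K_def)
  have "0 \<le> h" by (simp add: h_def)
  have "\<bar>w \<bullet> v\<bar> / K \<le> h"
  proof (rule dense_ge)
    fix H assume "h < H"
    with \<open>0 \<le> h\<close> have "0 < H" by linarith
    have "enn2real (moment_dir M w t) = h powr t"
      using assms(5) by (simp add: h_def powr_powr)
    also have "\<dots> \<le> H powr t"
      using \<open>h < H\<close> assms(5) by (intro powr_mono2) (auto simp: h_def)
    finally have "(1 / H) powr t * enn2real (moment_dir M w t) \<le> 1"
      using \<open>0 < H\<close> by (simp add: powr_divide divide_le_eq mult.commute)
    moreover have "moment_dir M ((1 / H) *\<^sub>R w) t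
        = ennreal ((1 / H) powr t * enn2real (moment_dir M w t))"
      using assms(7) \<open>0 < H\<close>
      by (simp add: moment_dir_scaleR[OF assms(2)] ennreal_mult ennreal_enn2real_if)
    ultimately have "moment_dir M ((1 / H) *\<^sub>R w) t \<le> 1"
      by simp
    then have "\<bar>((1 / H) *\<^sub>R w) \<bullet> v\<bar> \<le> K"
      unfolding K_def by (rule abs_inner_le_of_moment_le_one[OF assms(1-6)])
    then show "\<bar>w \<bullet> v\<bar> / K \<le> H"
      using \<open>0 < H\<close> \<open>0 < K\<close> by (simp add: abs_mult field_simps)
  qed
  then show ?thesis
    using \<open>0 < K\<close> by (simp add: K_def h_def field_simps)
qed

lemma mem_Z_setI:
  assumes "0 < t"
    and "\<And>w. moment_dir M w t < \<infinity> \<Longrightarrow> \<bar>w \<bullet> z\<bar> \<le> enn2real (moment_dir M w t) powr (1/t)"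
  shows "z \<in> Z_set t M"
  unfolding Z_set_def
proof (intro CollectI allI)
  fix w
  show "ennreal (\<bar>w \<bullet> z\<bar> powr t) \<le> moment_dir M w t"
  proof (cases "moment_dir M w t < \<infinity>")
    case True
    then have "\<bar>w \<bullet> z\<bar> powr t \<le> (enn2real (moment_dir M w t) powr (1/t)) powr t"
      using assms by (intro powr_mono2) auto
    also have "\<dots> = enn2real (moment_dir M w t)"
      using assms(1) by (simp add: powr_powr)
    finally have "ennreal (\<bar>w \<bullet> z\<bar> powr t) \<le> ennreal (enn2real (moment_dir M w t))"
      by (rule ennreal_leI)
    with True show ?thesis
      by (simp add: ennreal_enn2real_if less_top[symmetric])
  qed (simp add: less_top[symmetric])
qed

theorem proposition2p3:
  fixes M :: "'a::euclidean_space measure" and \<alpha> t :: real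
  assumes "prob_space M" and "sets M = sets borel"
    and "\<alpha> \<ge> 1" and "regular \<alpha> M" and "t \<ge> 2"
  shows "B_set t M \<subseteq> (\<lambda>z. (4 * exp 1 * \<alpha>) *\<^sub>R z) ` Z_set t M"
proof
  fix v assume v: "v \<in> B_set t M"
  define K where "K = 4 * exp 1 * \<alpha>"
  have "0 < K" using assms(3) by (simp add: K_def)
  have "(1 / K) *\<^sub>R v \<in> Z_set t M"
  proof (rule mem_Z_setI)
    fix w assume "moment_dir M w t < \<infinity>"
    then have "\<bar>w \<bullet> v\<bar> \<le> K * enn2real (moment_dir M w t) powr (1/t)"
      unfolding K_def by (rule abs_inner_le_moment_root[OF assms(1,2,4,3,5) v])
    then show "\<bar>w \<bullet> (1 / K) *\<^sub>R v\<bar> \<le> enn2real (moment_dir M w t) powr (1/t)"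
      using \<open>0 < K\<close> by (simp add: abs_mult pos_divide_le_eq mult.commute)
  qed (use assms(5) in simp)
  moreover have "v = K *\<^sub>R ((1 / K) *\<^sub>R v)"
    using \<open>0 < K\<close> by simp
  ultimately show "v \<in> (\<lambda>z. (4 * exp 1 * \<alpha>) *\<^sub>R z) ` Z_set t M"
    unfolding K_def by blast
qed

end
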